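(* Let $\kappa>0$ and let $F\in C^4(\mathbb{R})$ be an even function for which there exist values $\phi_1<\phi_3<0<\phi_4<\phi_2$ such that: $F$ is strictly decreasing on $(-\infty,\phi_1)$ and on $(0,\phi_2)$ and strictly increasing on $(\phi_1,0)$ and on $(\phi_2,+\infty)$; $F$ is convex on $(-\infty,\phi_3)$ and on $(\phi_4,+\infty)$ and concave on $(\phi_3,\phi_4)$; $F$ has local minima at $\phi_1,\phi_2$ with $F(\phi_1)=F(\phi_2)=0$, and a local maximum at $0$. For $a\in(0,\phi_2)$ define $$p(a)=4\int_0^a \frac{dy}{\sqrt{\frac{2}{\kappa}\,(F(y)-F(a))}}.$$ Then for all $a\in(0,\phi_2)$, $$p'(a)=\frac{2\sqrt{2\kappa}}{\sqrt{F(0)-F(a)}}-\sqrt{2\kappa}\int_0^a\frac{F'(y)-F'(a)}{(F(y)-F(a))^{3/2}}\,dy .$$ In addition, if $F'''(\phi)>0$ for all $\phi\in(0,\phi_2)$, then $p'(a)>0$ for all $a\in(0,\phi_2)$.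
   Context: $p(a)$ is the period of the (unique up to translation) periodic stationary solution of amplitude $a$ of the Cahn--Hilliard equation $\phi_t=(M(\phi)(-\kappa\phi_{xx}+F'(\phi))_x)_x$, i.e. of $-\kappa\bar\phi''+F'(\bar\phi)=0$. The integrals above are (possibly) improper at $y=a$. *)

theory Defs
  imports "HOL-Analysis.Analysis"
begin

definition C_k_real :: "nat \<Rightarrow> (real \<Rightarrow> real) \<Rightarrow> bool" where
  "C_k_real k F \<longleftrightarrow>
     (\<forall>j<k. \<forall>x. ((deriv ^^ j) F) differentiable (at x)) \<and> continuous_on UNIV ((deriv ^^ k) F)"

text \<open>Period of the periodic stationary solution of amplitude a (improper integral at y = a,
  taken as a Henstock-Kurzweil integral over [0,a]).\<close>
definition period :: "real \<Rightarrow> (real \<Rightarrow> real) \<Rightarrow> real \<Rightarrow> real" where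
  "period \<kappa> F a = 4 * integral {0..a} (\<lambda>y. 1 / sqrt ((2 / \<kappa>) * (F y - F a)))"

end

theory Submission
  imports Defs
begin

text \<open>
  The period is \<open>2 sqrt (2 \<kappa>) T a\<close>, where \<open>T a\<close> is the integral of
  \<open>(F y - F a) powr (-1/2)\<close> over \<open>[0, a]\<close>. The substitution \<open>y = a - a u\<^sup>2\<close> turns
  it into the integral of \<open>2 a / sqrt (Q a (u\<^sup>2))\<close> over \<open>[0, 1]\<close>, where
  \<open>Q a v = (F (a - a v) - F a) / v\<close>. This integrand is smooth in \<open>a\<close> up to the end
  point \<open>u = 0\<close>, so \<open>T\<close> can be differentiated under the integral sign. The
  \<open>a\<close>-derivative of the integrand plus half the substituted form of
  \<open>(F' y - F' a) / (F y - F a) powr (3/2)\<close> is the \<open>u\<close>-derivative of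
  \<open>u / sqrt (Q a (u\<^sup>2))\<close>, which integrates to \<open>1 / sqrt (F 0 - F a)\<close>.

  For the sign, the numerator of the \<open>a\<close>-derivative of the integrand is a positive multiple
  of a difference of values of \<open>t \<mapsto> F t - t F' t / 2\<close>. This function decreases on
  \<open>[0, \<phi>\<^sub>2)\<close>, because its derivative is \<open>(F' t - t F'' t) / 2\<close> and \<open>t F'' t - F' t\<close>
  vanishes at \<open>0\<close> and has derivative \<open>t F''' t > 0\<close>.
\<close>

text \<open>The mean of \<open>f'\<close> over the segment, rather than the difference quotient of
  \<open>f\<close>, so that it is continuous across the diagonal \<open>x = y\<close>.\<close>

definition secant_slope :: "(real \<Rightarrow> real) \<Rightarrow> real \<Rightarrow> real \<Rightarrow> real" where
  "secant_slope f' x y = integral {0..1} (\<lambda>t. f' (x + t * (y - x)))"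

lemma secant_slope_same [simp]: "secant_slope f' x x = f' x"
  by (simp add: secant_slope_def)

lemma secant_slope_eq:
  assumes f': "\<And>z. (f has_real_derivative f' z) (at z)" and "x \<noteq> y"
  shows "secant_slope f' x y = (f y - f x) / (y - x)"
proof -
  have "((\<lambda>t. f (x + t * (y - x))) has_real_derivative f' (x + t * (y - x)) * (0 + 1 * (y - x)))
      (at t)" for t
    by (rule DERIV_chain2[OF f' DERIV_add[OF DERIV_const DERIV_cmult_right[OF DERIV_ident]]])
  then have "((\<lambda>t. f (x + t * (y - x))) has_vector_derivative f' (x + t * (y - x)) * (y - x))
      (at t within {0..1})" for t
    by (simp add: has_real_derivative_iff_has_vector_derivative has_vector_derivative_at_within)
  then have "((\<lambda>t. f' (x + t * (y - x)) * (y - x)) has_integral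
      f (x + 1 * (y - x)) - f (x + 0 * (y - x))) {0..1}"
    by (intro fundamental_theorem_of_calculus) simp_all
  then have "integral {0..1} (\<lambda>t. f' (x + t * (y - x)) * (y - x)) = f y - f x"
    by (rule integral_unique[THEN trans]) simp
  then have "secant_slope f' x y * (y - x) = f y - f x"
    by (simp add: secant_slope_def)
  then show ?thesis
    using \<open>x \<noteq> y\<close> by (simp add: field_simps)
qed

lemma continuous_on_secant_slope:
  assumes f': "continuous_on UNIV f'"
    and "continuous_on S g" "continuous_on S h"
  shows "continuous_on S (\<lambda>s. secant_slope f' (g s) (h s))"
proof -
  have "continuous_on UNIV (\<lambda>p. integral (cbox 0 1) (\<lambda>t. f' (fst p + t * (snd p - fst p))))"
    by (intro integral_continuous_on_param, unfold split_beta)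
       (rule continuous_on_compose2[OF f'], auto intro!: continuous_intros)
  then have "continuous_on UNIV (\<lambda>p. secant_slope f' (fst p) (snd p))"
    by (simp add: secant_slope_def)
  from continuous_on_compose2[OF this continuous_on_Pair[OF assms(2,3)]] show ?thesis
    by auto
qed

lemma substitution_point:
  assumes "0 < a" "0 < y" "y < a"
  defines "t \<equiv> sqrt ((a - y) / a)"
  shows "t > 0" "a - a * t\<^sup>2 = y" "t\<^sup>2 \<noteq> 0" "sqrt (t\<^sup>2) = t"
  using assms by (auto simp: t_def field_simps)

lemma has_integral_substitution_sqrt:
  fixes f g :: "real \<Rightarrow> real"
  assumes a: "a > 0" and g: "continuous_on {0..1} g"
    and f: "\<And>y. 0 < y \<Longrightarrow> y < a \<Longrightarrow>
              f y = g (sqrt ((a - y) / a)) / (2 * a * sqrt ((a - y) / a))"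
  shows "(f has_integral integral {0..1} g) {0..a}"
proof -
  define s where "s y = sqrt ((a - y) / a)" for y
  have s_deriv: "(s has_real_derivative - 1 / (2 * a * s y)) (at y within {0..a})"
    if "y \<in> {0..a} - {a}" for y
  proof -
    have "((\<lambda>y. (a - y) / a) has_real_derivative - 1 / a) (at y)"
      using a by (auto intro!: derivative_eq_intros)
    then have "(s has_real_derivative inverse (s y) / 2 * (- 1 / a)) (at y)"
      unfolding s_def using that a by (intro DERIV_chain2[OF DERIV_real_sqrt]) auto
    then show ?thesis
      by (rule has_field_derivative_at_within[OF DERIV_cong]) (simp add: field_simps)
  qed
  have "s ` {0..a} \<subseteq> {0..1}" "continuous_on {0..a} s"
    using a unfolding s_def by (auto intro!: continuous_intros)
  from has_integral_substitution_general[of "{a}", OF _ _ this(1) g this(2) s_deriv]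
  have "((\<lambda>y. - 1 / (2 * a * s y) * g (s y)) has_integral - integral {0..1} g) {0..a}"
    using a by (simp add: s_def)
  from has_integral_neg[OF this]
  have "((\<lambda>y. g (s y) / (2 * a * s y)) has_integral integral {0..1} g) {0..a}"
    by simp
  then show ?thesis
    by (rule has_integral_spike_finite[of "{0, a}", rotated 2]) (auto simp: f s_def)
qed

lemma powr_three_halves:
  fixes x :: real
  assumes "0 \<le> x"
  shows "x powr (3/2) = x * sqrt x"
proof -
  have "x powr (3/2) = x powr (1 + 1/2)"
    by simp
  also have "\<dots> = x * sqrt x"
    using assms by (simp only: powr_add powr_one powr_half_sqrt)
  finally show ?thesis .
qed

lemma convex_on_greaterThan_above_tangent:
  fixes F f :: "real \<Rightarrow> real"
  assumes convex: "convex_on {d<..} F"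
    and F': "\<And>x. (F has_real_derivative f x) (at x)" and "isCont f d"
    and "d \<le> a" "a < x"
  shows "f a * (x - a) \<le> F x - F a"
proof -
  have tangent: "f z * (y - z) \<le> F y - F z" if "d < z" "d < y" for z y
    using that
    by (intro convex_on_imp_above_tangent[OF convex] has_field_derivative_at_within[OF F'])
       (simp_all add: convex_connected interior_open)
  show ?thesis
  proof (cases "a = d")
    case False
    with tangent assms show ?thesis
      by simp
  next
    case True
    txt \<open>At the end point \<open>d\<close> of the domain the tangent inequality is the limit of
      those at interior points.\<close>
    have "((\<lambda>z. F x - F z - f z * (x - z)) \<longlongrightarrow> F x - F d - f d * (x - d)) (at_right d)"
      using DERIV_isCont[OF F', of d] \<open>isCont f d\<close>
      by (intro tendsto_intros) (auto simp: isCont_def filterlim_at_split)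
    moreover have "eventually (\<lambda>z. 0 \<le> F x - F z - f z * (x - z)) (at_right d)"
      using eventually_at_right_real[of d x] \<open>a < x\<close> True
      by (auto elim!: eventually_mono dest: tangent[of _ x])
    ultimately have "0 \<le> F x - F d - f d * (x - d)"
      by (rule tendsto_lowerbound) simp
    then show ?thesis
      using True by simp
  qed
qed

lemma derivative_neg_on_descent:
  fixes F f :: "real \<Rightarrow> real"
  assumes F': "\<And>x. (F has_real_derivative f x) (at x)" and "isCont f d"
    and decreasing: "strict_antimono_on {0<..<b} F"
    and concave: "concave_on {c<..<d} F" and convex: "convex_on {d<..} F"
    and "c < 0" "d < b" "0 < a" "a < b"
  shows "f a < 0"
proof (cases "a < d")
  case True
  have "- f a * (a / 2 - a) \<le> - F (a / 2) - - F a"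
    using concave True assms
    by (intro convex_on_imp_above_tangent has_field_derivative_at_within[OF DERIV_minus[OF F']])
       (auto simp: concave_on_def interior_open convex_connected)
  moreover have "F a < F (a / 2)"
    using monotone_onD[OF decreasing, of "a / 2" a] assms by auto
  ultimately have "f a * (a / 2) < 0"
    by (simp add: algebra_simps)
  with \<open>0 < a\<close> show ?thesis
    by (simp add: mult_less_0_iff)
next
  case False
  define x where "x = (a + b) / 2"
  have "f a * (x - a) \<le> F x - F a"
    using False assms
    by (intro convex_on_greaterThan_above_tangent[OF convex F']) (simp_all add: x_def)
  moreover have "F x < F a"
    using monotone_onD[OF decreasing, of a x] assms by (auto simp: x_def)
  ultimately have "f a * (x - a) < 0"
    by simp
  moreover have "x - a > 0"
    using assms by (simp add: x_def)
  ultimately show ?thesis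
    by (simp add: mult_less_0_iff)
qed

lemma C_k_real_has_real_derivative:
  assumes "C_k_real k F" "j < k"
  shows "((deriv ^^ j) F has_real_derivative (deriv ^^ Suc j) F x) (at x)"
  using assms unfolding C_k_real_def by (simp add: DERIV_deriv_iff_real_differentiable)

definition quarter_period :: "(real \<Rightarrow> real) \<Rightarrow> real \<Rightarrow> real" where
  "quarter_period F a = integral {0..a} (\<lambda>y. 1 / sqrt (F y - F a))"

lemma period_eq_quarter_period: "period \<kappa> F a = 2 * sqrt (2 * \<kappa>) * quarter_period F a"
proof -
  have scale: "1 / sqrt (2 / \<kappa> * z) = sqrt \<kappa> / sqrt 2 * (1 / sqrt z)" for z
    by (simp add: real_sqrt_mult real_sqrt_divide)
  have "period \<kappa> F a = 4 * (sqrt \<kappa> / sqrt 2) * quarter_period F a"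
    unfolding period_def quarter_period_def scale
    by (simp only: Henstock_Kurzweil_Integration.integral_mult_right mult.assoc)
  also have "4 * (sqrt \<kappa> / sqrt 2) = 2 * sqrt (2 * \<kappa>)"
    by (simp add: real_sqrt_mult field_simps)
  finally show ?thesis .
qed

locale descending_potential =
  fixes F F' F'' :: "real \<Rightarrow> real" and b :: real
  assumes F': "\<And>x. (F has_real_derivative F' x) (at x)"
    and F'': "\<And>x. (F' has_real_derivative F'' x) (at x)"
    and continuous_F'': "continuous_on UNIV F''"
    and F'_neg: "\<And>x. 0 < x \<Longrightarrow> x < b \<Longrightarrow> F' x < 0"
begin

lemma continuous_F': "continuous_on UNIV F'"
  by (meson DERIV_isCont F'' continuous_at_imp_continuous_on)

lemma F_decreasing:
  assumes "0 \<le> x" "x < y" "y < b"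
  shows "F y < F x"
proof (rule DERIV_neg_imp_decreasing_open[OF \<open>x < y\<close>])
  show "\<exists>l. (F has_real_derivative l) (at t) \<and> l < 0" if "x < t" "t < y" for t
    using F' F'_neg that assms by force
  show "continuous_on {x..y} F"
    by (meson DERIV_isCont F' continuous_at_imp_continuous_on)
qed

text \<open>The quotients \<open>(F y - F a) / v\<close> and \<open>(F' y - F' a) / v\<close> of the substitution
  \<open>y = a - a v\<close>, written via \<open>secant_slope\<close> so that they extend continuously to
  \<open>v = 0\<close>.\<close>

definition F_quot :: "real \<Rightarrow> real \<Rightarrow> real" where
  "F_quot a v = - a * secant_slope F' a (a - a * v)"

definition F'_quot :: "real \<Rightarrow> real \<Rightarrow> real" where
  "F'_quot a v = - a * secant_slope F'' a (a - a * v)"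

lemma F_quot_eq: "v \<noteq> 0 \<Longrightarrow> F_quot a v = (F (a - a * v) - F a) / v"
  by (cases "a = 0") (auto simp: F_quot_def secant_slope_eq[OF F'] field_simps)

lemma F'_quot_eq: "v \<noteq> 0 \<Longrightarrow> F'_quot a v = (F' (a - a * v) - F' a) / v"
  by (cases "a = 0") (auto simp: F'_quot_def secant_slope_eq[OF F''] field_simps)

lemma F_quot_0 [simp]: "F_quot a 0 = - a * F' a"
  by (simp add: F_quot_def)

lemma F'_quot_0 [simp]: "F'_quot a 0 = - a * F'' a"
  by (simp add: F'_quot_def)

lemma F_quot_1 [simp]: "F_quot a 1 = F 0 - F a"
  by (simp add: F_quot_eq)

lemma continuous_on_F' [continuous_intros]:
  "continuous_on S g \<Longrightarrow> continuous_on S (\<lambda>s. F' (g s))"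
  by (rule continuous_on_compose2[OF continuous_F']) auto

lemma continuous_on_F_quot [continuous_intros]:
  "continuous_on S g \<Longrightarrow> continuous_on S h \<Longrightarrow> continuous_on S (\<lambda>s. F_quot (g s) (h s))"
  unfolding F_quot_def by (intro continuous_intros continuous_on_secant_slope continuous_F')

lemma continuous_on_F'_quot [continuous_intros]:
  "continuous_on S g \<Longrightarrow> continuous_on S h \<Longrightarrow> continuous_on S (\<lambda>s. F'_quot (g s) (h s))"
  unfolding F'_quot_def by (intro continuous_intros continuous_on_secant_slope continuous_F'')

lemma F_quot_pos:
  assumes "0 < a" "a < b" "0 \<le> v" "v \<le> 1"
  shows "F_quot a v > 0"
proof (cases "v = 0")
  case True
  then show ?thesis
    using F'_neg[of a] assms by (simp add: mult_pos_neg)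
next
  case False
  have "F a < F (a - a * v)"
    using assms False by (intro F_decreasing) (auto simp: mult_le_cancel_left1)
  then show ?thesis
    using assms False by (simp add: F_quot_eq)
qed

lemma F_quot_sq_pos: "0 < a \<Longrightarrow> a < b \<Longrightarrow> u \<in> {0..1} \<Longrightarrow> F_quot a (u\<^sup>2) > 0"
  by (intro F_quot_pos) (auto simp: power_le_one)

lemma has_real_derivative_F_quot:
  "((\<lambda>a. F_quot a v) has_real_derivative F'_quot a v - F' (a - a * v)) (at a)"
proof (cases "v = 0")
  case True
  show ?thesis
    unfolding True by (auto intro!: derivative_eq_intros F'' simp: algebra_simps)
next
  case False
  have "((\<lambda>a. (F (a - a * v) - F a) / v) has_real_derivative
      (F' (a - a * v) * (1 - v) - F' a) / v) (at a)"
    using False by (auto intro!: derivative_eq_intros DERIV_chain2[OF F'] F')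
  moreover have "(F' (a - a * v) * (1 - v) - F' a) / v = F'_quot a v - F' (a - a * v)"
    using False by (simp add: F'_quot_eq field_simps)
  ultimately show ?thesis
    using False by (simp add: F_quot_eq)
qed

definition period_kernel :: "real \<Rightarrow> real \<Rightarrow> real" where
  "period_kernel a u = 2 * a / sqrt (F_quot a (u\<^sup>2))"

definition period_kernel_deriv :: "real \<Rightarrow> real \<Rightarrow> real" where
  "period_kernel_deriv a u =
     (2 * F_quot a (u\<^sup>2) - a * (F'_quot a (u\<^sup>2) - F' (a - a * u\<^sup>2)))
       / (F_quot a (u\<^sup>2) * sqrt (F_quot a (u\<^sup>2)))"

definition force_kernel :: "real \<Rightarrow> real \<Rightarrow> real" where
  "force_kernel a u = 2 * a * F'_quot a (u\<^sup>2) / (F_quot a (u\<^sup>2) * sqrt (F_quot a (u\<^sup>2)))"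

lemma continuous_on_period_kernel: "0 < a \<Longrightarrow> a < b \<Longrightarrow> continuous_on {0..1} (period_kernel a)"
  unfolding period_kernel_def using F_quot_sq_pos[of a]
  by (auto intro!: continuous_intros simp: less_imp_neq[symmetric])

lemma continuous_on_force_kernel: "0 < a \<Longrightarrow> a < b \<Longrightarrow> continuous_on {0..1} (force_kernel a)"
  unfolding force_kernel_def using F_quot_sq_pos[of a]
  by (auto intro!: continuous_intros simp: less_imp_neq[symmetric])

lemma continuous_on_period_kernel_deriv:
  "0 < a \<Longrightarrow> a < b \<Longrightarrow> continuous_on {0..1} (period_kernel_deriv a)"
  unfolding period_kernel_deriv_def using F_quot_sq_pos[of a]
  by (auto intro!: continuous_intros simp: less_imp_neq[symmetric])

lemma continuous_on_period_kernel_deriv_Times: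
  assumes "S \<subseteq> {0<..<b}"
  shows "continuous_on (S \<times> {0..1}) (\<lambda>(a, u). period_kernel_deriv a u)"
  unfolding period_kernel_deriv_def split_beta using assms F_quot_sq_pos
  by (auto intro!: continuous_intros simp: less_imp_neq[symmetric] subset_eq)

lemma has_real_derivative_period_kernel:
  assumes "0 < a" "a < b" "u \<in> {0..1}"
  shows "((\<lambda>a. period_kernel a u) has_real_derivative period_kernel_deriv a u) (at a)"
proof -
  define q where "q = F_quot a (u\<^sup>2)"
  have q: "q > 0"
    using F_quot_sq_pos[OF assms] by (simp add: q_def)
  have "((\<lambda>a. 2 * a / sqrt (F_quot a (u\<^sup>2))) has_real_derivative
      (2 * sqrt q - 2 * a * (inverse (sqrt q) / 2 * (F'_quot a (u\<^sup>2) - F' (a - a * u\<^sup>2))))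
        / (sqrt q * sqrt q)) (at a)"
    using q unfolding q_def
    by (auto intro!: derivative_eq_intros has_real_derivative_F_quot)
  moreover have
    "(2 * sqrt q - 2 * a * (inverse (sqrt q) / 2 * (F'_quot a (u\<^sup>2) - F' (a - a * u\<^sup>2))))
       / (sqrt q * sqrt q) = period_kernel_deriv a u"
    using q unfolding period_kernel_deriv_def q_def[symmetric] by (simp add: field_simps)
  ultimately show ?thesis
    by (simp add: period_kernel_def)
qed

lemma quarter_period_eq_integral_period_kernel:
  assumes "0 < a" "a < b"
  shows "quarter_period F a = integral {0..1} (period_kernel a)"
proof -
  have "((\<lambda>y. 1 / sqrt (F y - F a)) has_integral integral {0..1} (period_kernel a)) {0..a}"
  proof (rule has_integral_substitution_sqrt[OF \<open>0 < a\<close> continuous_on_period_kernel[OF assms]])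
    fix y assume y: "0 < y" "y < a"
    define t where "t = sqrt ((a - y) / a)"
    note t = substitution_point[OF \<open>0 < a\<close> y, folded t_def]
    have "period_kernel a t = 2 * a / sqrt ((F y - F a) / t\<^sup>2)"
      using t by (simp add: period_kernel_def F_quot_eq)
    also have "\<dots> = 2 * a * t / sqrt (F y - F a)"
      using t by (simp add: real_sqrt_divide)
    finally show "1 / sqrt (F y - F a) = period_kernel a t / (2 * a * sqrt ((a - y) / a))"
      using t assms by (simp add: t_def[symmetric])
  qed
  then show ?thesis
    by (simp add: quarter_period_def integral_unique)
qed

lemma integral_eq_integral_force_kernel:
  assumes "0 < a" "a < b"
  shows "integral {0..a} (\<lambda>y. (F' y - F' a) / (F y - F a) powr (3/2))
       = integral {0..1} (force_kernel a)"
proof -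
  have "((\<lambda>y. (F' y - F' a) / (F y - F a) powr (3/2)) has_integral integral {0..1} (force_kernel a))
      {0..a}"
  proof (rule has_integral_substitution_sqrt[OF \<open>0 < a\<close> continuous_on_force_kernel[OF assms]])
    fix y assume y: "0 < y" "y < a"
    define t where "t = sqrt ((a - y) / a)"
    note t = substitution_point[OF \<open>0 < a\<close> y, folded t_def]
    have G: "F y - F a > 0"
      using F_decreasing[of y a] y assms by simp
    have "force_kernel a t
        = 2 * a * ((F' y - F' a) / t\<^sup>2) / ((F y - F a) / t\<^sup>2 * sqrt ((F y - F a) / t\<^sup>2))"
      using t by (simp add: force_kernel_def F_quot_eq F'_quot_eq)
    also have "\<dots> = 2 * a * t * (F' y - F' a) / ((F y - F a) * sqrt (F y - F a))"
      using t G by (simp add: real_sqrt_divide field_simps)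
    moreover note powr_three_halves[of "F y - F a"]
    ultimately show "(F' y - F' a) / (F y - F a) powr (3/2)
        = force_kernel a t / (2 * a * sqrt ((a - y) / a))"
      using t G assms by (simp add: t_def[symmetric])
  qed
  then show ?thesis
    by (simp add: integral_unique)
qed

lemma quarter_period_has_derivative_integral:
  assumes a: "0 < a" "a < b"
  shows "(quarter_period F has_real_derivative integral {0..1} (period_kernel_deriv a)) (at a)"
proof -
  define \<delta> where "\<delta> = min a (b - a) / 2"
  define U where "U = {a - \<delta> .. a + \<delta>}"
  have \<delta>: "\<delta> > 0"
    using a by (simp add: \<delta>_def)
  have "\<delta> \<le> a / 2" "\<delta> \<le> (b - a) / 2"
    by (simp_all add: \<delta>_def)
  then have U: "U \<subseteq> {0<..<b}"
    using a by (auto simp: U_def)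
  have "((\<lambda>x. integral (cbox 0 1) (period_kernel x)) has_field_derivative
      integral (cbox 0 1) (period_kernel_deriv a)) (at a within U)"
  proof (rule leibniz_rule_field_derivative)
    show "((\<lambda>x. period_kernel x u) has_field_derivative period_kernel_deriv x u) (at x within U)"
      if "x \<in> U" "u \<in> cbox 0 1" for x u
      using that U
      by (intro has_field_derivative_at_within[OF has_real_derivative_period_kernel]) auto
    show "period_kernel x integrable_on cbox 0 1" if "x \<in> U" for x
      using that U continuous_on_period_kernel[of x] by (auto simp: integrable_continuous_real)
    show "continuous_on (U \<times> cbox 0 1) (\<lambda>(x, u). period_kernel_deriv x u)"
      using continuous_on_period_kernel_deriv_Times[OF U] by simp
  qed (use \<delta> in \<open>auto simp: U_def\<close>)
  moreover have "at a within U = at a"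
    unfolding U_def using \<delta> by (intro at_within_Icc_at) auto
  ultimately have "((\<lambda>x. integral {0..1} (period_kernel x)) has_real_derivative
      integral {0..1} (period_kernel_deriv a)) (at a)"
    by simp
  then show ?thesis
    by (rule has_field_derivative_transform_within_open[where S = "{0<..<b}"])
       (use a in \<open>auto simp: quarter_period_eq_integral_period_kernel\<close>)
qed

lemma has_real_derivative_F_quot_sq:
  assumes "0 < u"
  shows "((\<lambda>u. F_quot a (u\<^sup>2)) has_real_derivative
           - 2 * (a * F' (a - a * u\<^sup>2) + F_quot a (u\<^sup>2)) / u) (at u)"
proof -
  define w where "w = F' (a - a * u\<^sup>2)"
  have "((\<lambda>u. (F (a - a * u\<^sup>2) - F a) / u\<^sup>2) has_real_derivative
      (w * (- a * (2 * u)) * u\<^sup>2 - (F (a - a * u\<^sup>2) - F a) * (2 * u)) / (u\<^sup>2 * u\<^sup>2)) (at u)"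
    unfolding w_def using assms
    by (auto intro!: derivative_eq_intros DERIV_chain2[OF F'] simp: power2_eq_square)
  moreover have "(w * (- a * (2 * u)) * u\<^sup>2 - (F (a - a * u\<^sup>2) - F a) * (2 * u)) / (u\<^sup>2 * u\<^sup>2)
      = - 2 * (a * w + F_quot a (u\<^sup>2)) / u"
    using assms by (simp add: F_quot_eq field_simps power2_eq_square)
  ultimately have "((\<lambda>u. (F (a - a * u\<^sup>2) - F a) / u\<^sup>2) has_real_derivative
      - 2 * (a * w + F_quot a (u\<^sup>2)) / u) (at u)"
    by simp
  then show ?thesis
    unfolding w_def
    by (rule has_field_derivative_transform_within_open[where S = "{0<..}"])
       (use assms in \<open>auto simp: F_quot_eq\<close>)
qed

lemma has_real_derivative_u_div_sqrt_F_quot: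
  assumes a: "0 < a" "a < b" and u: "0 < u" "u < 1"
  shows "((\<lambda>u. u / sqrt (F_quot a (u\<^sup>2))) has_real_derivative
           period_kernel_deriv a u + force_kernel a u / 2) (at u)"
proof -
  define q where "q = F_quot a (u\<^sup>2)"
  define w where "w = F' (a - a * u\<^sup>2)"
  have q: "q > 0"
    unfolding q_def using F_quot_sq_pos[OF a] u by simp
  have "((\<lambda>u. u / sqrt (F_quot a (u\<^sup>2))) has_real_derivative
      (1 * sqrt q - u * (inverse (sqrt q) / 2 * (- 2 * (a * w + q) / u))) / (sqrt q * sqrt q))
      (at u)"
    using q u unfolding q_def w_def
    by (auto intro!: derivative_eq_intros DERIV_chain2[OF DERIV_real_sqrt]
        has_real_derivative_F_quot_sq)
  moreover have
    "(1 * sqrt q - u * (inverse (sqrt q) / 2 * (- 2 * (a * w + q) / u))) / (sqrt q * sqrt q)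
      = period_kernel_deriv a u + force_kernel a u / 2"
    using q u unfolding period_kernel_deriv_def force_kernel_def q_def[symmetric] w_def[symmetric]
    by (simp add: field_simps)
  ultimately show ?thesis
    by simp
qed

lemma integral_period_kernel_deriv:
  assumes a: "0 < a" "a < b"
  shows "integral {0..1} (period_kernel_deriv a)
       = 1 / sqrt (F 0 - F a) - integral {0..1} (force_kernel a) / 2"
proof -
  have "((\<lambda>u. period_kernel_deriv a u + force_kernel a u / 2) has_integral
      integral {0..1} (period_kernel_deriv a) + integral {0..1} (force_kernel a) / 2) {0..1}"
    using continuous_on_period_kernel_deriv[OF a] continuous_on_force_kernel[OF a]
    by (intro has_integral_add has_integral_divide integrable_integral integrable_continuous_real)
  moreover have "((\<lambda>u. period_kernel_deriv a u + force_kernel a u / 2) has_integral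
      1 / sqrt (F_quot a (1\<^sup>2)) - 0 / sqrt (F_quot a (0\<^sup>2))) {0..1}"
    using a F_quot_sq_pos[OF a]
    by (intro fundamental_theorem_of_calculus_interior)
       (auto intro!: continuous_intros has_real_derivative_u_div_sqrt_F_quot
         simp: less_imp_neq[symmetric] simp flip: has_real_derivative_iff_has_vector_derivative)
  ultimately show ?thesis
    by (auto dest: has_integral_unique)
qed

theorem quarter_period_has_derivative:
  assumes "0 < a" "a < b"
  shows "(quarter_period F has_real_derivative
           1 / sqrt (F 0 - F a)
           - integral {0..a} (\<lambda>y. (F' y - F' a) / (F y - F a) powr (3/2)) / 2) (at a)"
  using quarter_period_has_derivative_integral[OF assms]
  by (simp add: integral_period_kernel_deriv[OF assms] integral_eq_integral_force_kernel[OF assms])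

theorem period_has_derivative:
  assumes "0 < a" "a < b"
  shows "(period \<kappa> F has_real_derivative
           2 * sqrt (2 * \<kappa>) / sqrt (F 0 - F a)
           - sqrt (2 * \<kappa>) * integral {0..a} (\<lambda>y. (F' y - F' a) / (F y - F a) powr (3/2))) (at a)"
  using DERIV_cmult[OF quarter_period_has_derivative[OF assms], of "2 * sqrt (2 * \<kappa>)"]
  by (simp add: period_eq_quarter_period[abs_def] algebra_simps)

end

lemma descending_potential_derivs:
  fixes F :: "real \<Rightarrow> real"
  assumes C4: "C_k_real 4 F" and decreasing: "strict_antimono_on {0<..<b} F"
    and concave: "concave_on {c<..<d} F" and convex: "convex_on {d<..} F"
    and "c < 0" "d < b"
  shows "descending_potential F (deriv F) ((deriv ^^ 2) F) b"
proof
  show F': "(F has_real_derivative deriv F x) (at x)" for x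
    using C_k_real_has_real_derivative[OF C4, of 0] by simp
  show F'': "(deriv F has_real_derivative (deriv ^^ 2) F x) (at x)" for x
    using C_k_real_has_real_derivative[OF C4, of 1] by (simp add: numeral_2_eq_2)
  have "((deriv ^^ 2) F has_real_derivative (deriv ^^ 3) F x) (at x)" for x
    using C_k_real_has_real_derivative[OF C4, of 2] by (simp add: numeral_2_eq_2 numeral_3_eq_3)
  then show "continuous_on UNIV ((deriv ^^ 2) F)"
    by (meson DERIV_isCont continuous_at_imp_continuous_on)
  show "deriv F a < 0" if "0 < a" "a < b" for a
    using that assms
    by (intro derivative_neg_on_descent[OF F' DERIV_isCont[OF F''] decreasing concave convex]) auto
qed

locale descending_potential_convex_force = descending_potential +
  fixes F''' :: "real \<Rightarrow> real"
  assumes F''': "\<And>x. (F'' has_real_derivative F''' x) (at x)"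
    and F'''_pos: "\<And>x. 0 < x \<Longrightarrow> x < b \<Longrightarrow> F''' x > 0"
    and F'_0: "F' 0 = 0"
begin

lemma F'_less_mult_F'':
  assumes "0 < x" "x < b"
  shows "F' x < x * F'' x"
proof -
  have deriv: "((\<lambda>t. t * F'' t - F' t) has_real_derivative t * F''' t) (at t)" for t
    by (auto intro!: derivative_eq_intros F'' F''')
  have "(\<lambda>t. t * F'' t - F' t) 0 < (\<lambda>t. t * F'' t - F' t) x"
  proof (rule DERIV_pos_imp_increasing_open[OF \<open>0 < x\<close>])
    show "\<exists>l. ((\<lambda>t. t * F'' t - F' t) has_real_derivative l) (at t) \<and> l > 0"
      if "0 < t" "t < x" for t
      using deriv[of t] F'''_pos[of t] that assms by (intro exI[of _ "t * F''' t"]) simp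
    show "continuous_on {0..x} (\<lambda>t. t * F'' t - F' t)"
      using deriv by (meson DERIV_isCont continuous_at_imp_continuous_on)
  qed
  then show ?thesis
    using F'_0 by simp
qed

lemma decreasing_F_minus_half_t_F':
  assumes "0 \<le> y" "y < z" "z < b"
  shows "F z - z * F' z / 2 < F y - y * F' y / 2"
proof -
  have deriv: "((\<lambda>t. F t - t * F' t / 2) has_real_derivative (F' t - t * F'' t) / 2) (at t)" for t
    by (auto intro!: derivative_eq_intros F' F'' simp: field_simps)
  show ?thesis
  proof (rule DERIV_neg_imp_decreasing_open[OF \<open>y < z\<close>, where f = "\<lambda>t. F t - t * F' t / 2"])
    show "\<exists>l. ((\<lambda>t. F t - t * F' t / 2) has_real_derivative l) (at t) \<and> l < 0"
      if "y < t" "t < z" for t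
      using deriv[of t] F'_less_mult_F''[of t] that assms
      by (intro exI[of _ "(F' t - t * F'' t) / 2"]) simp
    show "continuous_on {y..z} (\<lambda>t. F t - t * F' t / 2)"
      using deriv by (meson DERIV_isCont continuous_at_imp_continuous_on)
  qed
qed

lemma period_kernel_deriv_pos:
  assumes a: "0 < a" "a < b" and u: "u \<in> {0..1}"
  shows "period_kernel_deriv a u > 0"
proof -
  define v where "v = u\<^sup>2"
  have v: "0 \<le> v" "v \<le> 1"
    using u by (auto simp: v_def power_le_one)
  have "2 * F_quot a v - a * (F'_quot a v - F' (a - a * v)) > 0"
  proof (cases "v = 0")
    case True
    then show ?thesis
      using F'_less_mult_F''[OF a] a by (simp add: algebra_simps)
  next
    case False
    define y where "y = a - a * v"
    have y: "0 \<le> y" "y < a"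
      using v False a by (auto simp: y_def mult_le_cancel_left1)
    have "2 * F_quot a v - a * (F'_quot a v - F' (a - a * v))
        = 2 * ((F y - y * F' y / 2) - (F a - a * F' a / 2)) / v"
      using False by (simp add: F_quot_eq F'_quot_eq y_def field_simps)
    then show ?thesis
      using decreasing_F_minus_half_t_F'[OF y a(2)] v False by simp
  qed
  moreover have "F_quot a v > 0"
    using F_quot_pos[OF a v] .
  ultimately show ?thesis
    by (simp add: period_kernel_deriv_def v_def)
qed

theorem period_deriv_pos:
  assumes "0 < \<kappa>" "0 < a" "a < b"
  shows "deriv (period \<kappa> F) a > 0"
proof -
  have "deriv (period \<kappa> F) a = 2 * sqrt (2 * \<kappa>) * integral {0..1} (period_kernel_deriv a)"
    using DERIV_cmult[OF quarter_period_has_derivative_integral[OF assms(2,3)]]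
    by (simp add: period_eq_quarter_period[abs_def] DERIV_imp_deriv)
  moreover have "integral {0..1} (\<lambda>_::real. 0) < integral {0..1} (period_kernel_deriv a)"
    using period_kernel_deriv_pos[OF assms(2,3)] continuous_on_period_kernel_deriv[OF assms(2,3)]
    by (intro integral_less_real) auto
  ultimately show ?thesis
    using \<open>0 < \<kappa>\<close> by simp
qed

end

lemma descending_potential_convex_force_derivs:
  fixes F :: "real \<Rightarrow> real"
  assumes "descending_potential F (deriv F) ((deriv ^^ 2) F) b" and C4: "C_k_real 4 F"
    and "\<forall>x\<in>{0<..<b}. (deriv ^^ 3) F x > 0"
    and max0: "\<exists>e>0. \<forall>y. \<bar>y\<bar> < e \<longrightarrow> F y \<le> F 0"
  shows "descending_potential_convex_force F (deriv F) ((deriv ^^ 2) F) b ((deriv ^^ 3) F)"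
proof -
  obtain e where e: "e > 0" "\<forall>y. \<bar>y\<bar> < e \<longrightarrow> F y \<le> F 0"
    using max0 by blast
  have "(F has_real_derivative deriv F 0) (at 0)"
    using C_k_real_has_real_derivative[OF C4, of 0] by simp
  then have "deriv F 0 = 0"
    by (rule DERIV_local_max[OF _ \<open>e > 0\<close>]) (use e in simp)
  moreover have "((deriv ^^ 2) F has_real_derivative (deriv ^^ 3) F x) (at x)" for x
    using C_k_real_has_real_derivative[OF C4, of 2] by (simp add: numeral_2_eq_2 numeral_3_eq_3)
  ultimately show ?thesis
    using assms(1,3)
    by (intro descending_potential_convex_force.intro
        descending_potential_convex_force_axioms.intro) auto
qed

theorem proposition1:
  fixes \<kappa> :: real and F :: "real \<Rightarrow> real" and \<phi>1 \<phi>2 \<phi>3 \<phi>4 :: real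
  assumes kappa_pos: "\<kappa> > 0"
    and C4: "C_k_real 4 F"
    and even: "\<And>x. F (- x) = F x"
    and order: "\<phi>1 < \<phi>3" "\<phi>3 < 0" "0 < \<phi>4" "\<phi>4 < \<phi>2"
    and dec1: "strict_antimono_on {..<\<phi>1} F"
    and dec2: "strict_antimono_on {0<..<\<phi>2} F"
    and inc1: "strict_mono_on {\<phi>1<..<0} F"
    and inc2: "strict_mono_on {\<phi>2<..} F"
    and cvx1: "convex_on {..<\<phi>3} F"
    and cvx2: "convex_on {\<phi>4<..} F"
    and ccv: "concave_on {\<phi>3<..<\<phi>4} F"
    and min1: "\<exists>e>0. \<forall>y. \<bar>y - \<phi>1\<bar> < e \<longrightarrow> F \<phi>1 \<le> F y"
    and min2: "\<exists>e>0. \<forall>y. \<bar>y - \<phi>2\<bar> < e \<longrightarrow> F \<phi>2 \<le> F y"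
    and zero: "F \<phi>1 = 0" "F \<phi>2 = 0"
    and max0: "\<exists>e>0. \<forall>y. \<bar>y\<bar> < e \<longrightarrow> F y \<le> F 0"
  shows "(\<forall>a\<in>{0<..<\<phi>2}.
            (period \<kappa> F has_real_derivative
               (2 * sqrt (2 * \<kappa>) / sqrt (F 0 - F a)
                - sqrt (2 * \<kappa>) * integral {0..a}
                    (\<lambda>y. (deriv F y - deriv F a) / (F y - F a) powr (3/2)))) (at a))
       \<and> ((\<forall>x\<in>{0<..<\<phi>2}. (deriv ^^ 3) F x > 0) \<longrightarrow>
            (\<forall>a\<in>{0<..<\<phi>2}. deriv (period \<kappa> F) a > 0))"
proof -
  have potential: "descending_potential F (deriv F) ((deriv ^^ 2) F) \<phi>2"
    using descending_potential_derivs[OF C4 dec2 ccv cvx2] order by simp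
  show ?thesis
    using descending_potential.period_has_derivative[OF potential]
      descending_potential_convex_force.period_deriv_pos[OF
        descending_potential_convex_force_derivs[OF potential C4 _ max0] kappa_pos]
    by auto
qed

end
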